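(* For $n\ge1$, $$\left|\Pi_n\wr C_2(1^11^1,1^12^2,1^22^1)\right|=\begin{cases}4&\text{if } n=2,\\ 2&\text{otherwise}.\end{cases}$$
   Context: For $n\ge0$ let $[n]=\{1,\dots,n\}$. A $2$-colored set partition of $[n]$ is a set partition of $[n]$ together with an assignment of a color from $\{1,2\}$ to each element; $\Pi_n\wr C_2$ is the set of these. For a set $S$ of patterns, $\Pi_n\wr C_2(S)$ is the set of such colored partitions avoiding every pattern in $S$ in the pattern sense. For the patterns used here: $\sigma$ contains $1^11^1$ iff two elements in the same block have the same color; $1^12^2$ iff there are $i<j$ in different blocks with $i$ colored $1$ and $j$ colored $2$; $1^22^1$ iff there are $i<j$ in different blocks with $i$ colored $2$ and $j$ colored $1$. *)

theory Defs
  imports Main "HOL-Library.Disjoint_Sets" "HOL-Library.FuncSet"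
begin

text \<open>A 2-colored set partition of [n]: a set partition P of {1..n} together with a
colouring c : {1..n} -> {1,2} (extensional, i.e. c is undefined outside {1..n}).\<close>
definition colored_partitions :: "nat \<Rightarrow> (nat set set \<times> (nat \<Rightarrow> nat)) set" where
  "colored_partitions n =
     {(P, c). partition_on {1..n} P \<and> c \<in> {1..n} \<rightarrow>\<^sub>E {1, 2}}"

definition same_block :: "nat set set \<Rightarrow> nat \<Rightarrow> nat \<Rightarrow> bool" where
  "same_block P i j \<longleftrightarrow> (\<exists>B\<in>P. i \<in> B \<and> j \<in> B)"

definition contains_1111 :: "nat \<Rightarrow> nat set set \<times> (nat \<Rightarrow> nat) \<Rightarrow> bool" where
  "contains_1111 n \<sigma> \<longleftrightarrow> (\<exists>i\<in>{1..n}. \<exists>j\<in>{1..n}. i < j \<and>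
      same_block (fst \<sigma>) i j \<and> snd \<sigma> i = snd \<sigma> j)"

definition contains_1122 :: "nat \<Rightarrow> nat set set \<times> (nat \<Rightarrow> nat) \<Rightarrow> bool" where
  "contains_1122 n \<sigma> \<longleftrightarrow> (\<exists>i\<in>{1..n}. \<exists>j\<in>{1..n}. i < j \<and>
      \<not> same_block (fst \<sigma>) i j \<and> snd \<sigma> i = 1 \<and> snd \<sigma> j = 2)"

definition contains_1221 :: "nat \<Rightarrow> nat set set \<times> (nat \<Rightarrow> nat) \<Rightarrow> bool" where
  "contains_1221 n \<sigma> \<longleftrightarrow> (\<exists>i\<in>{1..n}. \<exists>j\<in>{1..n}. i < j \<and>
      \<not> same_block (fst \<sigma>) i j \<and> snd \<sigma> i = 2 \<and> snd \<sigma> j = 1)"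

definition avoiders :: "nat \<Rightarrow> (nat set set \<times> (nat \<Rightarrow> nat)) set" where
  "avoiders n = {\<sigma> \<in> colored_partitions n.
      \<not> contains_1111 n \<sigma> \<and> \<not> contains_1122 n \<sigma> \<and> \<not> contains_1221 n \<sigma>}"

end

theory Submission
  imports Defs
begin

text \<open>Avoiding the three patterns says exactly: two distinct elements lie in the same block
iff their colours differ. Hence a block has at most two elements, one of each colour, and
elements of different blocks share their colour. If some block \<open>{i, j}\<close> has two elements
and \<open>n \<ge> 3\<close>, a third element \<open>k\<close> lies outside it and so must have both colours of
\<open>i\<close> and \<open>j\<close>, which is impossible. So for \<open>n \<noteq> 2\<close> only the partition into
singletons with a constant colouring survives, while for \<open>n = 2\<close> the block \<open>{1, 2}\<close>
with its two bicolourings adds two more.\<close>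

lemma same_block_equiv: "partition_on A P \<Longrightarrow> equiv A {(x, y). same_block P x y}"
  unfolding same_block_def by (rule equiv_partition_on)

lemma partition_on_eq_quotient_same_block:
  "partition_on A P \<Longrightarrow> A // {(x, y). same_block P x y} = P"
  unfolding same_block_def by (rule partition_on_eq_quotient)

lemma partition_on_eqI:
  assumes P: "partition_on A P" and Q: "partition_on A Q"
    and same: "\<And>x y. x \<in> A \<Longrightarrow> y \<in> A \<Longrightarrow> same_block P x y \<longleftrightarrow> same_block Q x y"
  shows "P = Q"
proof -
  have "{(x, y). same_block P x y} \<subseteq> A \<times> A" "{(x, y). same_block Q x y} \<subseteq> A \<times> A"
    using equiv_type same_block_equiv P Q by blast+
  then have "{(x, y). same_block P x y} = {(x, y). same_block Q x y}"
    using same by auto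
  then show ?thesis
    using partition_on_eq_quotient_same_block P Q by metis
qed

lemma same_block_commute: "same_block P x y \<longleftrightarrow> same_block P y x"
  unfolding same_block_def by blast

lemma same_block_trans:
  "partition_on A P \<Longrightarrow> same_block P x y \<Longrightarrow> same_block P y z \<Longrightarrow> same_block P x z"
  using same_block_equiv unfolding equiv_def trans_def by blast

lemma same_block_refl: "partition_on A P \<Longrightarrow> x \<in> A \<Longrightarrow> same_block P x x"
  unfolding same_block_def partition_on_def by blast

lemma same_block_singletons: "x \<in> A \<Longrightarrow> same_block ((\<lambda>i. {i}) ` A) x y \<longleftrightarrow> x = y"
  unfolding same_block_def by auto

lemma same_block_space: "x \<in> A \<Longrightarrow> y \<in> A \<Longrightarrow> same_block {A} x y"
  unfolding same_block_def by auto

lemma mem_avoiders_iff: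
  "(P, c) \<in> avoiders n \<longleftrightarrow> partition_on {1..n} P \<and> c \<in> {1..n} \<rightarrow>\<^sub>E {1, 2} \<and>
     (\<forall>i\<in>{1..n}. \<forall>j\<in>{1..n}. i \<noteq> j \<longrightarrow> (same_block P i j \<longleftrightarrow> c i \<noteq> c j))"
    (is "_ \<longleftrightarrow> _ \<and> ?col \<and> ?rule")
proof -
  have "(\<not> contains_1111 n (P, c) \<and> \<not> contains_1122 n (P, c) \<and> \<not> contains_1221 n (P, c))
      \<longleftrightarrow> (\<forall>i\<in>{1..n}. \<forall>j\<in>{1..n}. i < j \<longrightarrow> (same_block P i j \<longleftrightarrow> c i \<noteq> c j))"
    if ?col
  proof -
    have colours: "c i \<in> {1, 2}" if "i \<in> {1..n}" for i
      using \<open>?col\<close> that by auto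
    have two_colours: "(same_block P i j \<longrightarrow> c i \<noteq> c j) \<and>
        (\<not> same_block P i j \<longrightarrow> \<not> (c i = 1 \<and> c j = 2) \<and> \<not> (c i = 2 \<and> c j = 1))
        \<longleftrightarrow> (same_block P i j \<longleftrightarrow> c i \<noteq> c j)" if "i \<in> {1..n}" "j \<in> {1..n}" for i j
      using colours[OF that(1)] colours[OF that(2)] by auto
    have "(\<not> contains_1111 n (P, c) \<and> \<not> contains_1122 n (P, c) \<and> \<not> contains_1221 n (P, c))
      \<longleftrightarrow> (\<forall>i\<in>{1..n}. \<forall>j\<in>{1..n}. i < j \<longrightarrow> (same_block P i j \<longrightarrow> c i \<noteq> c j) \<and>
        (\<not> same_block P i j \<longrightarrow> \<not> (c i = 1 \<and> c j = 2) \<and> \<not> (c i = 2 \<and> c j = 1)))"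
      unfolding contains_1111_def contains_1122_def contains_1221_def by auto
    then show ?thesis
      using two_colours by simp
  qed
  moreover have "(\<forall>i\<in>{1..n}. \<forall>j\<in>{1..n}. i < j \<longrightarrow> (same_block P i j \<longleftrightarrow> c i \<noteq> c j)) \<longleftrightarrow> ?rule"
  proof -
    have "(same_block P i j \<longleftrightarrow> c i \<noteq> c j) \<longleftrightarrow> (same_block P j i \<longleftrightarrow> c j \<noteq> c i)" for i j
      using same_block_commute[of P i j] by auto
    then show ?thesis
      by (metis linorder_neqE_nat less_irrefl)
  qed
  ultimately show ?thesis
    unfolding avoiders_def colored_partitions_def by auto
qed

lemma avoider_blocks_trivial:
  assumes "n \<noteq> 2" and avoid: "(P, c) \<in> avoiders n"
    and ij: "i \<in> {1..n}" "j \<in> {1..n}" and "same_block P i j"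
  shows "i = j"
proof (rule ccontr)
  assume "i \<noteq> j"
  have part: "partition_on {1..n} P" and col: "c \<in> {1..n} \<rightarrow>\<^sub>E {1, 2}"
    and rule: "\<And>i j. i \<in> {1..n} \<Longrightarrow> j \<in> {1..n} \<Longrightarrow> i \<noteq> j \<Longrightarrow> same_block P i j \<longleftrightarrow> c i \<noteq> c j"
    using avoid unfolding mem_avoiders_iff by auto
  have "c i \<noteq> c j"
    using rule[OF ij \<open>i \<noteq> j\<close>] \<open>same_block P i j\<close> by blast
  have "n \<ge> 3"
    using ij \<open>i \<noteq> j\<close> \<open>n \<noteq> 2\<close> by auto
  then have "{1, 2, 3} \<subseteq> {1..n}"
    by auto
  moreover have "\<exists>k\<in>{1, 2, 3::nat}. k \<noteq> i \<and> k \<noteq> j"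
    by auto
  ultimately obtain k where k: "k \<in> {1..n}" "k \<noteq> i" "k \<noteq> j"
    by blast
  have "c k \<in> {1, 2}" "c i \<in> {1, 2}" "c j \<in> {1, 2}"
    using col ij k by auto
  moreover have "same_block P i k \<longleftrightarrow> same_block P j k"
    using same_block_trans[OF part] same_block_commute \<open>same_block P i j\<close> by blast
  ultimately show False
    using rule[OF ij(1) k(1)] rule[OF ij(2) k(1)] k \<open>c i \<noteq> c j\<close> by auto
qed

definition discrete_monochromatic :: "nat set \<Rightarrow> (nat set set \<times> (nat \<Rightarrow> nat)) set" where
  "discrete_monochromatic A = (\<lambda>a. ((\<lambda>i. {i}) ` A, \<lambda>i\<in>A. a)) ` {1, 2}"

definition bicoloured_pair :: "(nat set set \<times> (nat \<Rightarrow> nat)) set" where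
  "bicoloured_pair = {({{1, 2}}, \<lambda>i\<in>{1, 2}. i), ({{1, 2}}, \<lambda>i\<in>{1, 2}. 3 - i)}"

lemma discrete_monochromatic_subset_avoiders: "discrete_monochromatic {1..n} \<subseteq> avoiders n"
  unfolding discrete_monochromatic_def
  using partition_on_singletons same_block_singletons by (auto simp: mem_avoiders_iff)

lemma avoiders_eq_if_ne_2:
  assumes "n \<noteq> 2"
  shows "avoiders n = discrete_monochromatic {1..n}"
proof (rule antisym[OF subsetI discrete_monochromatic_subset_avoiders])
  fix \<sigma> assume "\<sigma> \<in> avoiders n"
  then obtain P c where \<sigma>: "\<sigma> = (P, c)" and avoid: "(P, c) \<in> avoiders n"
    by (cases \<sigma>) auto
  have part: "partition_on {1..n} P" and col: "c \<in> {1..n} \<rightarrow>\<^sub>E {1, 2}"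
    and rule: "\<And>i j. i \<in> {1..n} \<Longrightarrow> j \<in> {1..n} \<Longrightarrow> i \<noteq> j \<Longrightarrow> same_block P i j \<longleftrightarrow> c i \<noteq> c j"
    using avoid unfolding mem_avoiders_iff by auto
  have trivial: "same_block P i j \<longleftrightarrow> i = j" if "i \<in> {1..n}" "j \<in> {1..n}" for i j
    using avoider_blocks_trivial[OF assms avoid that] same_block_refl[OF part that(1)] by blast
  have P: "P = (\<lambda>i. {i}) ` {1..n}"
    by (rule partition_on_eqI[OF part partition_on_singletons]) (simp add: trivial same_block_singletons)
  obtain a where a: "a \<in> {1, 2}" "\<And>i. i \<in> {1..n} \<Longrightarrow> c i = a"
  proof (cases "n = 0")
    case True
    then show ?thesis
      using that[of 1] by simp
  next
    case False
    then have one: "1 \<in> {1..n}"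
      by simp
    have "c i = c 1" if "i \<in> {1..n}" for i
      using rule[OF that one] trivial[OF that one] by blast
    moreover have "c 1 \<in> {1, 2}"
      using col one by blast
    ultimately show ?thesis
      using that by blast
  qed
  have "c = (\<lambda>i\<in>{1..n}. a)"
    using PiE_restrict[OF col] a(2) by (metis restrict_ext)
  then show "\<sigma> \<in> discrete_monochromatic {1..n}"
    unfolding discrete_monochromatic_def using \<sigma> P a(1) by blast
qed

lemma atLeastAtMost_1_2: "{1..2::nat} = {1, 2}"
  by auto

lemma bicoloured_pair_subset_avoiders_2: "bicoloured_pair \<subseteq> avoiders 2"
  unfolding bicoloured_pair_def insert_subset mem_avoiders_iff atLeastAtMost_1_2
  using partition_on_space[of "{1, 2 :: nat}"] same_block_space[of _ "{1, 2}"] by auto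

lemma mem_avoiders_2_cases:
  assumes avoid: "(P, c) \<in> avoiders 2"
  shows "(P, c) \<in> discrete_monochromatic {1, 2} \<union> bicoloured_pair"
proof -
  have part: "partition_on {1, 2} P" and col: "c \<in> {1, 2} \<rightarrow>\<^sub>E {1, 2}"
    and rule: "same_block P 1 2 \<longleftrightarrow> c 1 \<noteq> c 2"
    using avoid unfolding mem_avoiders_iff atLeastAtMost_1_2 by auto
  have c_eqI: "c = (\<lambda>i\<in>{1, 2}. d i)" if "c 1 = d 1" "c 2 = d 2" for d :: "nat \<Rightarrow> nat"
    using col that by (auto simp: fun_eq_iff PiE_def extensional_def)
  have colours: "c 1 \<in> {1, 2}" "c 2 \<in> {1, 2}"
    using col by auto
  have same_block_12: "same_block P 2 1 \<longleftrightarrow> same_block P 1 2"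
    by (rule same_block_commute)
  show ?thesis
  proof (cases "same_block P 1 2")
    case True
    then have "same_block P x y" if "x \<in> {1, 2}" "y \<in> {1, 2}" for x y
      using that same_block_refl[OF part] same_block_12 by auto
    then have "P = {{1, 2}}"
      by (intro partition_on_eqI[OF part partition_on_space]) (simp_all add: same_block_space)
    moreover have "c = (\<lambda>i\<in>{1, 2}. i) \<or> c = (\<lambda>i\<in>{1, 2}. 3 - i)"
      using True rule colours c_eqI[of "\<lambda>i. i"] c_eqI[of "\<lambda>i. 3 - i"] by auto
    ultimately show ?thesis
      unfolding bicoloured_pair_def by blast
  next
    case False
    then have "same_block P x y \<longleftrightarrow> x = y" if "x \<in> {1, 2}" "y \<in> {1, 2}" for x y
      using that same_block_refl[OF part] same_block_12 by auto
    then have "P = (\<lambda>i. {i}) ` {1, 2}"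
      using same_block_singletons[of _ "{1, 2}"]
      by (intro partition_on_eqI[OF part partition_on_singletons]) metis
    moreover have "c = (\<lambda>i\<in>{1, 2}. c 1)"
      by (rule c_eqI) (use False rule in simp_all)
    ultimately show ?thesis
      unfolding discrete_monochromatic_def using colours by blast
  qed
qed

lemma avoiders_2: "avoiders 2 = discrete_monochromatic {1, 2} \<union> bicoloured_pair"
proof (intro antisym subsetI)
  fix \<sigma> assume "\<sigma> \<in> avoiders 2"
  then show "\<sigma> \<in> discrete_monochromatic {1, 2} \<union> bicoloured_pair"
    using mem_avoiders_2_cases by (cases \<sigma>) blast
next
  fix \<sigma> assume "\<sigma> \<in> discrete_monochromatic {1, 2} \<union> bicoloured_pair"
  then show "\<sigma> \<in> avoiders 2"
    using discrete_monochromatic_subset_avoiders[of 2, unfolded atLeastAtMost_1_2]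
      bicoloured_pair_subset_avoiders_2 by blast
qed

lemma card_discrete_monochromatic:
  assumes "A \<noteq> {}"
  shows "card (discrete_monochromatic A) = 2"
proof -
  have "inj_on (\<lambda>a. ((\<lambda>i. {i}) ` A, \<lambda>i\<in>A. a)) {1, 2 :: nat}"
    using assms by (auto simp: inj_on_def fun_eq_iff)
  then show ?thesis
    unfolding discrete_monochromatic_def by (simp add: card_image)
qed

lemma card_bicoloured_pair: "card bicoloured_pair = 2"
proof -
  have "(\<lambda>i\<in>{1, 2 :: nat}. i) \<noteq> (\<lambda>i\<in>{1, 2}. 3 - i)"
    by (auto simp: fun_eq_iff dest: spec[of _ 1])
  then show ?thesis
    unfolding bicoloured_pair_def by simp
qed

lemma discrete_monochromatic_disjoint_bicoloured_pair:
  "discrete_monochromatic A \<inter> bicoloured_pair = {}"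
proof -
  have "{1, 2} \<notin> (\<lambda>i. {i}) ` A"
    by auto
  then have "(\<lambda>i. {i}) ` A \<noteq> {{1, 2}}"
    by auto
  then show ?thesis
    unfolding discrete_monochromatic_def bicoloured_pair_def by blast
qed

theorem mainTheorem11:
  fixes n :: nat
  assumes "n \<ge> 1"
  shows "card (avoiders n) = (if n = 2 then 4 else 2)"
proof (cases "n = 2")
  case True
  have "finite (discrete_monochromatic {1, 2})" "finite bicoloured_pair"
    unfolding discrete_monochromatic_def bicoloured_pair_def by simp_all
  then have "card (avoiders 2) = card (discrete_monochromatic {1, 2}) + card bicoloured_pair"
    unfolding avoiders_2 by (simp add: card_Un_disjoint discrete_monochromatic_disjoint_bicoloured_pair)
  then show ?thesis
    using True card_discrete_monochromatic[of "{1, 2}"] card_bicoloured_pair by simp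
next
  case False
  then show ?thesis
    using assms card_discrete_monochromatic[of "{1..n}"] by (simp add: avoiders_eq_if_ne_2)
qed

end
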